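(* Let $p\ge 1$ be an integer. Define integers $\pi_r(m)$ for $r\ge1$ and $m\ge 0$ recursively by $\pi_1(m)=0$ and, for $r\ge 2$, $$\pi_r(m)=\sum_{k=0}^{r-1}r^k\,\mathbf{d}_r\!\left(\mathbf{d}_r\!\left(0,\ \mathbf{d}_r\!\left(0,\tfrac{m}{(r-1)!}\right)+k\right),\ (r-1)r^{r-1}+\sum_{j=0}^{r-2}r^j\,\mathbf{d}_{r-1}\!\left(j,\pi_{r-1}(m)\right)\right).$$ Then for each integer $m$ with $0\le m\le p!-1$ there is a permutation $\sigma_m$ of $\{0,1,\ldots,p-1\}$ with $\pi_p(m)=\sum_{k=0}^{p-1}p^k\sigma_m(k)$ (i.e. the radix-$p$ digits $\mathbf{d}_p(k,\pi_p(m))$, $k=0,\ldots,p-1$, are a rearrangement of $0,\ldots,p-1$), and $m\mapsto\sigma_m$ is a bijection from $\{0,\ldots,p!-1\}$ onto the set of all $p!$ permutations of $\{0,\ldots,p-1\}$; thus $\pi_p(m)$ is the $m$-th permutation in an enumeration of all permutations of $p$ symbols.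
   Context: For an integer $p\ge 2$, an integer $k\ge 0$ and a real number $x\ge0$, the digit function is $\mathbf{d}_p(k,x)=\lfloor x/p^k\rfloor-p\lfloor x/p^{k+1}\rfloor$; by convention $\mathbf{d}_1(k,x)=0$ for all $k,x$. A permutation $\sigma$ of $\{0,\ldots,p-1\}$ is encoded by the integer $\sum_{k=0}^{p-1}p^k\sigma(k)$, whose $k$-th radix-$p$ digit is the image of $k$. *)

theory Defs
  imports Complex_Main "HOL-Combinatorics.Permutations"
begin

text \<open>Digit function d_p(k,x) = floor(x/p^k) - p floor(x/p^(k+1)); convention d_1 = 0
  (also used for the irrelevant case p = 0).\<close>
definition digit :: "nat \<Rightarrow> nat \<Rightarrow> real \<Rightarrow> int" where
  "digit p k x = (if p < 2 then 0
     else \<lfloor>x / real p ^ k\<rfloor> - int p * \<lfloor>x / real p ^ (k + 1)\<rfloor>)"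

text \<open>pi r m for r \<ge> 1; pi 0 is an unused dummy value. The clause for
  Suc (Suc n) is the recursion for r = n + 2, so r - 1 = Suc n.\<close>
fun perm_enum :: "nat \<Rightarrow> nat \<Rightarrow> int" where
  "perm_enum 0 m = 0"
| "perm_enum (Suc 0) m = 0"
| "perm_enum (Suc (Suc n)) m =
     (\<Sum>k<Suc (Suc n). int (Suc (Suc n)) ^ k *
        digit (Suc (Suc n))
          (nat (digit (Suc (Suc n)) 0
                  (of_int (digit (Suc (Suc n)) 0 (real m / fact (Suc n)) + int k))))
          (of_int (int (Suc n) * int (Suc (Suc n)) ^ Suc n
                   + (\<Sum>j<Suc n. int (Suc (Suc n)) ^ j
                        * digit (Suc n) j (of_int (perm_enum (Suc n) m))))))"

end

theory Submission
  imports Defs "HOL-Number_Theory.Cong"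
begin

text \<open>Reading m in the factorial number system, pi_r(m) encodes the permutation
  sigma_r(m) = sigma_{r-1}(m) \<circ> rho, where rho is the cyclic shift of {0,\<dots>,r-1} by
  c = \<lfloor>m/(r-1)!\<rfloor> mod r and sigma_{r-1}(m), a permutation of {0,\<dots>,r-2}, fixes r-1.
  The shift c is recovered from sigma_r(m) as the position sent to r-1, and sigma_{r-1}(m) only
  depends on m mod (r-1)!; so m \<mapsto> sigma_r(m) is injective on {0,\<dots>,r!-1}, hence a
  bijection onto the r! permutations.\<close>

lemma digits_sum_div_pow_mod:
  fixes b :: nat
  assumes "\<forall>k<N. a k < b" and "j < N"
  shows "(\<Sum>k<N. b ^ k * a k) div b ^ j mod b = a j"
  using assms
proof (induction j arbitrary: N a)
  case 0
  then obtain N' where N: "N = Suc N'" by (cases N) auto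
  have "(\<Sum>k<N. b ^ k * a k) = a 0 + b * (\<Sum>k<N'. b ^ k * a (Suc k))"
    unfolding N sum.lessThan_Suc_shift by (simp add: sum_distrib_left mult_ac)
  then show ?case using 0 N by simp
next
  case (Suc j)
  then obtain N' where N: "N = Suc N'" by (cases N) auto
  have expand: "(\<Sum>k<N. b ^ k * a k) = a 0 + b * (\<Sum>k<N'. b ^ k * a (Suc k))"
    unfolding N sum.lessThan_Suc_shift by (simp add: sum_distrib_left mult_ac)
  have "a 0 < b" using Suc.prems N by simp
  then have "(\<Sum>k<N. b ^ k * a k) div b = (\<Sum>k<N'. b ^ k * a (Suc k))"
    unfolding expand by simp
  then have "(\<Sum>k<N. b ^ k * a k) div b ^ Suc j = (\<Sum>k<N'. b ^ k * a (Suc k)) div b ^ j"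
    by (simp add: div_mult2_eq mult.commute)
  then show ?case using Suc.IH[of N' "\<lambda>k. a (Suc k)"] Suc.prems N by auto
qed

lemma digit_of_nat_div:
  assumes "2 \<le> p"
  shows "digit p j (real a / real b) = int (a div b div p ^ j mod p)"
proof -
  have scale: "real a / real b / real p ^ j = real a / real (b * p ^ j)"
    "real a / real b / real p ^ (j + 1) = real a / real (b * p ^ j * p)"
    by simp_all
  have "digit p j (real a / real b) = int (a div (b * p ^ j)) - int p * int (a div (b * p ^ j * p))"
    using assms unfolding digit_def scale floor_divide_of_nat_eq by simp
  also have "\<dots> = int (a div b div p ^ j mod p)"
    by (simp add: div_mult2_eq minus_mult_div_eq_mod[symmetric] of_nat_diff flip: of_nat_mult)
  finally show ?thesis .
qed

lemma digit_of_nat: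
  assumes "2 \<le> p"
  shows "digit p j (of_int (int a)) = int (a div p ^ j mod p)"
  using digit_of_nat_div[OF assms, of j a 1] by simp

definition perm_code :: "nat \<Rightarrow> (nat \<Rightarrow> nat) \<Rightarrow> nat" where
  "perm_code p \<sigma> = (\<Sum>k<p. p ^ k * \<sigma> k)"

text \<open>For p = 1 both sides vanish, by the convention on digit and \<sigma> 0 = 0.\<close>

lemma digit_perm_code:
  assumes "\<sigma> permutes {..<p}" and "j < p"
  shows "digit p j (of_int (int (perm_code p \<sigma>))) = int (\<sigma> j)"
proof (cases "p = 1")
  case True
  then show ?thesis using permutes_in_image[OF assms(1)] assms(2) by (simp add: digit_def)
next
  case False
  then have "2 \<le> p" using assms(2) by simp
  then have "digit p j (of_int (int (perm_code p \<sigma>))) = int (perm_code p \<sigma> div p ^ j mod p)"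
    by (rule digit_of_nat)
  also have "\<dots> = int (\<sigma> j)"
    using permutes_in_image[OF assms(1)] assms(2)
    by (simp add: perm_code_def digits_sum_div_pow_mod)
  finally show ?thesis .
qed

definition cyclic_shift :: "nat \<Rightarrow> nat \<Rightarrow> nat \<Rightarrow> nat" where
  "cyclic_shift r c k = (if k < r then (c + k) mod r else k)"

lemma cyclic_shift_mod: "cyclic_shift r (c mod r) = cyclic_shift r c"
  by (rule ext) (simp add: cyclic_shift_def mod_add_left_eq)

lemma cyclic_shift_permutes:
  assumes "0 < r"
  shows "cyclic_shift r c permutes {..<r}"
proof -
  have "inj_on (cyclic_shift r c) {..<r}"
  proof (rule inj_onI)
    fix k k' assume "k \<in> {..<r}" "k' \<in> {..<r}" "cyclic_shift r c k = cyclic_shift r c k'"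
    then show "k = k'"
      using cong_add_lcancel_nat[of c k k' r] by (simp add: cyclic_shift_def cong_def)
  qed
  moreover have "cyclic_shift r c ` {..<r} \<subseteq> {..<r}"
    using assms by (auto simp: cyclic_shift_def)
  ultimately have "bij_betw (cyclic_shift r c) {..<r} {..<r}"
    by (simp add: bij_betw_def endo_inj_surj)
  then show ?thesis by (rule bij_imp_permutes) (simp add: cyclic_shift_def)
qed

text \<open>The shift is read off as the position sent to n, the only point outside {..<n}.\<close>

lemma cyclic_shift_factorization_unique:
  assumes \<tau>: "\<tau> permutes {..<n}" and \<tau>': "\<tau>' permutes {..<n}"
    and c: "c < Suc n" and c': "c' < Suc n"
    and eq: "\<tau> \<circ> cyclic_shift (Suc n) c = \<tau>' \<circ> cyclic_shift (Suc n) c'"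
  shows "c = c'" and "\<tau> = \<tau>'"
proof -
  define k0 where "k0 = n - c"
  have "cyclic_shift (Suc n) c k0 = n" using c by (simp add: cyclic_shift_def k0_def)
  then have "\<tau>' (cyclic_shift (Suc n) c' k0) = n"
    using fun_cong[OF eq, of k0] permutes_not_in[OF \<tau>, of n] by simp
  moreover have "cyclic_shift (Suc n) c' k0 < Suc n" by (simp add: cyclic_shift_def k0_def)
  moreover have "\<And>x. x < n \<Longrightarrow> \<tau>' x < n" using permutes_in_image[OF \<tau>'] by simp
  ultimately have "cyclic_shift (Suc n) c' k0 = n"
    by (metis less_Suc_eq less_irrefl)
  then have "(c' + k0) mod Suc n = n" by (simp add: cyclic_shift_def k0_def split: if_splits)
  moreover have "c' + k0 < 2 * Suc n" using c' by (simp add: k0_def)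
  ultimately show "c = c'" using c c' by (simp add: k0_def mod_if split: if_splits)
  then show "\<tau> = \<tau>'"
    using eq surj_fun_eq[of "cyclic_shift (Suc n) c" UNIV \<tau> \<tau>']
      permutes_surj[OF cyclic_shift_permutes[of "Suc n" c]] by simp
qed

fun perm_of_index :: "nat \<Rightarrow> nat \<Rightarrow> nat \<Rightarrow> nat" where
  "perm_of_index 0 m = id"
| "perm_of_index (Suc 0) m = id"
| "perm_of_index (Suc (Suc n)) m =
     perm_of_index (Suc n) m \<circ> cyclic_shift (Suc (Suc n)) (m div fact (Suc n))"

lemma perm_of_index_permutes: "perm_of_index r m permutes {..<r}"
proof (induction r m rule: perm_of_index.induct)
  case (3 n m)
  then have "perm_of_index (Suc n) m permutes {..<Suc (Suc n)}"
    by (rule permutes_subset) auto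
  then show ?case
    by (simp only: perm_of_index.simps) (rule permutes_compose[OF cyclic_shift_permutes]; simp)
qed (simp_all only: perm_of_index.simps permutes_id)

lemma perm_enum_step_digit:
  assumes "k < Suc (Suc n)"
  shows "nat (digit (Suc (Suc n)) 0
            (of_int (digit (Suc (Suc n)) 0 (real m / fact (Suc n)) + int k)))
       = cyclic_shift (Suc (Suc n)) (m div fact (Suc n)) k"
proof -
  define r where "r = Suc (Suc n)"
  define c where "c = m div fact (Suc n)"
  have r: "2 \<le> r" by (simp add: r_def)
  have "digit r 0 (real m / real (fact (Suc n))) = int (c mod r)"
    using digit_of_nat_div[OF r, of 0 m "fact (Suc n)"] by (simp add: c_def)
  then have "digit r 0 (of_int (digit r 0 (real m / fact (Suc n)) + int k)) = int ((c mod r + k) mod r)"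
    using digit_of_nat[OF r, of 0 "c mod r + k"] by (simp only: of_nat_fact) simp
  then show ?thesis using assms by (simp add: r_def c_def cyclic_shift_def mod_add_left_eq)
qed

lemma perm_enum_eq_perm_code:
  "perm_enum (Suc n) m = int (perm_code (Suc n) (perm_of_index (Suc n) m))"
proof (induction n)
  case 0
  then show ?case by (simp add: perm_code_def)
next
  case (Suc n)
  define r where "r = Suc (Suc n)"
  define \<tau> where "\<tau> = perm_of_index (Suc n) m"
  define c where "c = m div fact (Suc n)"
  have \<tau>: "\<tau> permutes {..<Suc n}" unfolding \<tau>_def by (rule perm_of_index_permutes)
  then have \<tau>_r: "\<tau> permutes {..<r}" by (rule permutes_subset) (auto simp: r_def)
  have "int (Suc n) * int r ^ Suc n
          + (\<Sum>j<Suc n. int r ^ j * digit (Suc n) j (of_int (perm_enum (Suc n) m)))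
      = int (Suc n) * int r ^ Suc n + (\<Sum>j<Suc n. int r ^ j * int (\<tau> j))"
    using Suc.IH digit_perm_code[OF \<tau>] by (simp add: \<tau>_def)
  also have "\<dots> = int (perm_code r \<tau>)"
    using permutes_not_in[OF \<tau>, of "Suc n"] by (simp add: perm_code_def r_def algebra_simps)
  finally have code: "int (Suc n) * int r ^ Suc n
          + (\<Sum>j<Suc n. int r ^ j * digit (Suc n) j (of_int (perm_enum (Suc n) m)))
      = int (perm_code r \<tau>)" .
  have shift_digit: "digit r (nat (digit r 0 (of_int (digit r 0 (real m / fact (Suc n)) + int k))))
        (of_int (int (perm_code r \<tau>))) = int (\<tau> (cyclic_shift r c k))" if "k < r" for k
    using that digit_perm_code[OF \<tau>_r] perm_enum_step_digit[of k n m]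
      permutes_in_image[OF cyclic_shift_permutes[of r c]]
    by (simp add: r_def c_def)
  have "perm_enum r m = (\<Sum>k<r. int r ^ k * int (\<tau> (cyclic_shift r c k)))"
    unfolding r_def perm_enum.simps unfolding r_def[symmetric] code
    by (rule sum.cong[OF refl]) (simp only: lessThan_iff shift_digit)
  moreover have "perm_of_index r m = \<tau> \<circ> cyclic_shift r c"
    by (simp add: r_def \<tau>_def c_def)
  ultimately show ?case
    unfolding r_def[symmetric] perm_code_def by (simp only: of_nat_sum of_nat_mult of_nat_power comp_def)
qed

lemma perm_of_index_mod: "perm_of_index (Suc n) (m mod fact (Suc n)) = perm_of_index (Suc n) m"
proof (induction n arbitrary: m)
  case 0
  then show ?case by simp
next
  case (Suc n)
  define f where "f = (fact (Suc n) :: nat)"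
  define r where "r = Suc (Suc n)"
  have fact_eq: "fact (Suc (Suc n)) = f * r" by (simp add: f_def r_def)
  have step: "perm_of_index (Suc (Suc n)) k = perm_of_index (Suc n) k \<circ> cyclic_shift r (k div f)"
    for k by (simp only: perm_of_index.simps r_def f_def)
  have "perm_of_index (Suc n) (m mod (f * r)) = perm_of_index (Suc n) m"
    using Suc.IH[of "m mod (f * r)"] Suc.IH[of m] by (simp add: f_def mod_mod_cancel)
  moreover have "m mod (f * r) div f = m div f mod r"
    by (simp add: mod_mult2_eq f_def)
  ultimately show ?case
    unfolding fact_eq step using cyclic_shift_mod[of r "m div f"] by simp
qed

lemma inj_on_perm_of_index: "inj_on (perm_of_index (Suc n)) {..<fact (Suc n)}"
proof (induction n)
  case 0
  then show ?case by (simp add: inj_on_def)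
next
  case (Suc n)
  define f where "f = (fact (Suc n) :: nat)"
  show ?case
  proof (rule inj_onI)
    fix m m' assume m: "m \<in> {..<fact (Suc (Suc n))}" and m': "m' \<in> {..<fact (Suc (Suc n))}"
      and eq: "perm_of_index (Suc (Suc n)) m = perm_of_index (Suc (Suc n)) m'"
    have "m div f < Suc (Suc n)" "m' div f < Suc (Suc n)"
      using m m' by (simp_all add: f_def div_less_iff_less_mult mult.commute)
    then have div_eq: "m div f = m' div f"
      and "perm_of_index (Suc n) m = perm_of_index (Suc n) m'"
      using cyclic_shift_factorization_unique[OF perm_of_index_permutes perm_of_index_permutes]
        eq by (simp_all add: f_def)
    then have "m mod f = m' mod f"
      using inj_onD[OF Suc.IH] perm_of_index_mod[of n m] perm_of_index_mod[of n m']
      by (simp add: f_def)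
    with div_eq show "m = m'" by (metis div_mult_mod_eq)
  qed
qed

lemma bij_betw_perm_of_index:
  "bij_betw (perm_of_index (Suc n)) {..<fact (Suc n)} {\<sigma>. \<sigma> permutes {..<Suc n}}"
proof -
  have "perm_of_index (Suc n) ` {..<fact (Suc n)} \<subseteq> {\<sigma>. \<sigma> permutes {..<Suc n}}"
    using perm_of_index_permutes by auto
  moreover have "card (perm_of_index (Suc n) ` {..<fact (Suc n)})
      = card {\<sigma>. \<sigma> permutes {..<Suc n}}"
    using card_image[OF inj_on_perm_of_index] card_permutations[of "{..<Suc n}"] by simp
  ultimately have "perm_of_index (Suc n) ` {..<fact (Suc n)} = {\<sigma>. \<sigma> permutes {..<Suc n}}"
    by (simp add: card_subset_eq finite_permutations)
  then show ?thesis using inj_on_perm_of_index by (simp add: bij_betw_def)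
qed

theorem mainTheorem7:
  fixes p :: nat
  assumes "p \<ge> 1"
  shows "\<exists>\<sigma> :: nat \<Rightarrow> nat \<Rightarrow> nat.
           (\<forall>m < fact p. \<sigma> m permutes {..<p}
              \<and> perm_enum p m = (\<Sum>k<p. int p ^ k * int (\<sigma> m k)))
         \<and> bij_betw \<sigma> {..<fact p} {f. f permutes {..<p}}"
proof -
  obtain n where p: "p = Suc n" using assms by (cases p) auto
  show ?thesis
    unfolding p
    using perm_of_index_permutes perm_enum_eq_perm_code bij_betw_perm_of_index
    by (intro exI[of _ "perm_of_index (Suc n)"]) (simp add: perm_code_def)
qed

end
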